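(* For every DML query $Q$, the rewriting system $\mathcal{R}^{\mathrm{dml}}_{\Sigma,\mathcal{D}}(Q)$ is terminating (it admits no infinite sequence of one-step rewrites).
   Context: Setting. Order-sorted signature $\Sigma$ with sorts $\mathsf{Fact}$, $\mathsf{Bool}$ interpreted in an algebra $\mathcal{D}$ presented by structural axioms $A$ and confluent terminating equations with Boolean connectives and Boolean-valued equality; ground $\mathsf{Bool}$ terms reduce to $\mathsf{true}$/$\mathsf{false}$. Multisets of facts: associative commutative $\circ$ with identity $\emptyset$. Nominal sorts $s$ have values $\iota^s_n$ ($n\in\mathbb{N}$); for each nominal sort a fresh-fact constructor $C_s$; multisets of fresh facts are built analogously; $\upsilon(C_{s_1}(\iota^{s_1}_{m_1})\circ\cdots\circ C_{s_n}(\iota^{s_n}_{m_n}))=C_{s_1}(\iota^{s_1}_{m_1+1})\circ\cdots\circ C_{s_n}(\iota^{s_n}_{m_n+1})$. Patterns: $\circ$-combinations of groups $[F]_!$ (keep), $[F]_?$ (retain), $[F]_0$ (delete) with $F$ non-empty multisets of (possibly non-ground) facts, and $[G]_\star$ with $G$ a non-empty multiset of fresh facts (possibly with variables); $P_!,P_?,P_0,P_\star$ denote the respective wrapped multisets (empty if absent). $P$ is terminating if $P_?\neq\emptyset$, semi-terminating if $P_?\circ P_0\neq\emptyset$, terminating and preserving if $P_?\neq\emptyset$ and $P_0=P_\star=\emptyset$. Conditions: $\mathrm{False}$, $\{B\}$, $\neg\psi$, $\psi_1\vee\psi_2$, $\exists P.\psi$ ($P$ terminating and preserving). Condition-evaluation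 stacks and rules ("$X\mapsto Y$" meaning $\{F,S\,X\}^c\to\{F,S\,Y\}^c$, $F$ the current database, $\sigma=\{\vec a/\vec v\}$): $[\vec a]_{\mathrm{False}}\mapsto\mathrm{Res}(\mathsf{false})$; $[\vec a]_{\{B\}}\mapsto\mathrm{Res}(\sigma(B))$; $[\vec a]_{\neg\psi}\mapsto\mathrm{Not}[\vec a]_\psi$; $\mathrm{Not}\,\mathrm{Res}(B)\mapsto\mathrm{Res}(\neg B)$; $[\vec a]_{\psi_1\vee\psi_2}\mapsto[\vec a]^\downarrow_{\psi_1}[\vec a]_{\psi_2}$; $[\vec a]^\downarrow_\psi\mathrm{Res}(\mathsf{true})\mapsto\mathrm{Res}(\mathsf{true})$; $[\vec a]^\downarrow_\psi\mathrm{Res}(\mathsf{false})\mapsto[\vec a]_\psi$; $[\vec a]_{\exists P.\psi}\mapsto[F\mid\vec a]_{\exists P.\psi}$; if $\vec w$ lists the variables of $P$ not in $\vec v$, $\sigma'=\{\vec a/\vec v,\vec b/\vec w\}$, $F'=F''\circ\sigma'(P_!\circ P_?)$: $[F'\mid\vec a]_{\exists P.\psi}\mapsto[F''\circ\sigma'(P_!)\mid\vec a]_{\exists P.\psi}[\vec a,\vec b]^{\vec v,\vec w}_\psi$; $[F'\mid\vec a]_{\exists P.\psi}\mathrm{Res}(\mathsf{false})\mapsto[F'\mid\vec a]_{\exists P.\psi}$; $[F'\mid\vec a]_{\exists P.\psi}\mathrm{Res}(\mathsf{true})\mapsto\mathrm{Res}(\mathsf{true})$; if no matching exists, $[F'\mid\vec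 a]_{\exists P.\psi}\mapsto\mathrm{Res}(\mathsf{false})$. DML queries: $\emptyset$, $\mathrm{ok}$, facts $f$, $D\oplus D'$, $\varphi\Rightarrow D$, $\mathrm{From}\,P.D$ with $P$ terminating, and $\mathrm{From}\,P.D$ with $P$ semi-terminating and $D$ success assured (success-assured: $\mathrm{ok}$, a fact, or $D_1\oplus D_2$ with $D_1$ or $D_2$ success assured). Quantifiers bind the variables of $P$ not bound by the context. $\mathcal{R}^{\mathrm{dml}}_{\Sigma,\mathcal{D}}(Q)$: states $\{F,F',F_\star,S\}^d$ ($F$ current database, $F'$ facts to be added, $F_\star$ fresh facts, $S$ stack, top at right), terminal $\mathrm{New}(G,G_\star)$ and $\mathrm{Fail}(G,G_\star)$. Frames, for subqueries $R$ of $Q$: $\mathrm{Ok}$; $[\vec a]^{\vec v}_R$; $[\vec a]^{\vec v,\downarrow}_R$; $[\vec a\mid S']^{\vec v}_R$ ($S'$ a condition stack); iterator frames $[H\mid\vec a\mid B]^{\vec v}_{\mathrm{From}\,P.R}$ and tentative frames $[H\mid\vec a\mid B,F_0]^{\vec v}_{\mathrm{From}\,P.R}$ ($B$ Boolean). With "$X\mapsto Y$" meaning $\{F,F',F_\star,S\,X\}^d\to\{F,F',F_\star,S\,Y\}^d$: $\mathrm{Ok}\,\mathrm{Ok}\mapsto\mathrm{Ok}$; $[\vec a]_{\mathrm{ok}}\mapsto\mathrm{Ok}$; $[\vec a]_\emptyset\mapsto$ (nothing); $\{F,F',F_\star,S[\vec a]_f\}^d\to\{F,F'\circ\sigma(f),F_\star,S\,\mathrm{Ok}\}^d$;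 $[\vec a]_{R_1\oplus R_2}\mapsto[\vec a]^\downarrow_{R_2}[\vec a]_{R_1}$; $[\vec a]^\downarrow_{R_2}\mathrm{Ok}\mapsto\mathrm{Ok}[\vec a]_{R_2}$; $[\vec a]^\downarrow_{R_2}\mapsto[\vec a]_{R_2}$ (when it is the top frame); $[\vec a]_{\varphi\Rightarrow R}\mapsto[\vec a\mid[\vec a]^{\vec v}_\varphi]_R$; $[\vec a\mid\mathrm{Res}(\mathsf{false})]_R\mapsto$ (nothing); $[\vec a\mid\mathrm{Res}(\mathsf{true})]_R\mapsto[\vec a]_R$; for each condition rule $\{F,S'\}^c\to\{F,S''\}^c$, $[\vec a\mid S']_R\mapsto[\vec a\mid S'']_R$; $[\vec a]_{\mathrm{From}\,P.R}\mapsto[F\mid\vec a\mid\mathsf{false}]_{\mathrm{From}\,P.R}$; if $\vec w$ lists the variables of $P$ not in $\vec v$, $\sigma'=\{\vec a/\vec v,\vec b/\vec w\}$, $F=G\circ\sigma'(P_!\circ P_?\circ P_0)$, $H=H'\circ\sigma'(P_!\circ P_?\circ P_0)$ and $F_\star=K\circ\sigma'(P_\star)$, then $\{F,F',F_\star,S[H\mid\vec a\mid B]_{\mathrm{From}\,P.R}\}^d\to\{G\circ\sigma'(P_!\circ P_?),F',K\circ\upsilon(\sigma'(P_\star)),S[H'\circ\sigma'(P_!)\mid\vec a\mid B,\sigma'(P_0)]_{\mathrm{From}\,P.R}[\vec a,\vec b]^{\vec v,\vec w}_R\}^d$; $\{F,F',F_\star,S[H\mid\vec a\mid B,F_0]_{\mathrm{From}\,P.R}\}^d\to\{F\circ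 F_0,F',F_\star,S[H\circ F_0\mid\vec a\mid B]_{\mathrm{From}\,P.R}\}^d$; $[H\mid\vec a\mid B,F_0]_{\mathrm{From}\,P.R}\mathrm{Ok}\mapsto[H\mid\vec a\mid\mathsf{true}]_{\mathrm{From}\,P.R}$; if $H$ does not match $H'\circ\sigma'(P_!\circ P_?\circ P_0)$ for any $H',\vec b$, then $[H\mid\vec a\mid B]_{\mathrm{From}\,P.R}\mapsto\delta(B)$ with $\delta(\mathsf{true})=\mathrm{Ok}$, $\delta(\mathsf{false})=$ nothing; $\{F,F',F_\star,\mathrm{Ok}\}^d\to\mathrm{New}(F\circ F',F_\star)$; $\{F,F',F_\star,\text{empty}\}^d\to\mathrm{Fail}(F\circ F',F_\star)$. *)

theory Defs
  imports Main "HOL-Library.Multiset"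
begin

text \<open>
  Type parameters:
   'x  : variables;   'v : values (elements of the algebra D);
   'pf : (possibly non-ground) facts, as they occur in patterns/queries;
   'f  : ground facts (elements of sort Fact of D, i.e. modulo the equations);
   'pg : fresh-fact patterns C_s(t);  's : nominal sorts;
   'b  : Bool-sorted terms (possibly with variables).
  A ground fresh fact C_s(iota^s_n) is represented by the pair (s, n).
  A substitution {a/v} is a partial map env :: 'x \<rightharpoonup> 'v with domain the list v.
  The signature-dependent operations are parameters:
   inst e f   : sigma(f) for a fact f,
   instG e g  : sigma(g) for a fresh-fact pattern g,
   evalB e B  : the value (true/false) of the ground Bool term sigma(B),
   fvars f / gvars g : the variables occurring in f / g.
\<close>

type_synonym ('x,'v) env = "'x \<rightharpoonup> 'v"

text \<open>A pattern, given by its four wrapped multisets P_!, P_?, P_0, P_star.\<close>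
datatype ('pf,'pg) pattern =
  Pat (pkeep: "'pf multiset") (pret: "'pf multiset") (pdel: "'pf multiset") (pfresh: "'pg multiset")

definition terminating_pat :: "('pf,'pg) pattern \<Rightarrow> bool" where
  "terminating_pat P \<longleftrightarrow> pret P \<noteq> {#}"

definition semi_terminating_pat :: "('pf,'pg) pattern \<Rightarrow> bool" where
  "semi_terminating_pat P \<longleftrightarrow> pret P + pdel P \<noteq> {#}"

definition term_pres_pat :: "('pf,'pg) pattern \<Rightarrow> bool" where
  "term_pres_pat P \<longleftrightarrow> pret P \<noteq> {#} \<and> pdel P = {#} \<and> pfresh P = {#}"

definition pat_vars :: "('pf \<Rightarrow> 'x set) \<Rightarrow> ('pg \<Rightarrow> 'x set) \<Rightarrow> ('pf,'pg) pattern \<Rightarrow> 'x set" where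
  "pat_vars fvars gvars P =
     (\<Union>f\<in>set_mset (pkeep P + pret P + pdel P). fvars f) \<union> (\<Union>g\<in>set_mset (pfresh P). gvars g)"

text \<open>sigma' = {a/v, b/w} where w lists the variables of P not in v:
  e' extends e exactly by bindings for the variables of P not bound by e.\<close>
definition ext_env :: "('pf \<Rightarrow> 'x set) \<Rightarrow> ('pg \<Rightarrow> 'x set) \<Rightarrow> ('pf,'pg) pattern
                        \<Rightarrow> ('x,'v) env \<Rightarrow> ('x,'v) env \<Rightarrow> bool" where
  "ext_env fvars gvars P e e' \<longleftrightarrow>
     dom e' = dom e \<union> pat_vars fvars gvars P \<and> (\<forall>x\<in>dom e. e' x = e x)"

definition upsilon :: "('s \<times> nat) multiset \<Rightarrow> ('s \<times> nat) multiset" where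
  "upsilon G = image_mset (\<lambda>(s,n). (s, Suc n)) G"

datatype ('b,'pf,'pg) cond =
    CFalse
  | CBool 'b
  | CNot "('b,'pf,'pg) cond"
  | COr "('b,'pf,'pg) cond" "('b,'pf,'pg) cond"
  | CEx "('pf,'pg) pattern" "('b,'pf,'pg) cond"

fun wf_cond :: "('b,'pf,'pg) cond \<Rightarrow> bool" where
  "wf_cond CFalse = True"
| "wf_cond (CBool B) = True"
| "wf_cond (CNot \<psi>) = wf_cond \<psi>"
| "wf_cond (COr \<psi>1 \<psi>2) = (wf_cond \<psi>1 \<and> wf_cond \<psi>2)"
| "wf_cond (CEx P \<psi>) = (term_pres_pat P \<and> wf_cond \<psi>)"

datatype ('b,'pf,'pg) dml =
    DEmpty
  | DOk
  | DFact 'pf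
  | DPlus "('b,'pf,'pg) dml" "('b,'pf,'pg) dml"
  | DImp "('b,'pf,'pg) cond" "('b,'pf,'pg) dml"
  | DFrom "('pf,'pg) pattern" "('b,'pf,'pg) dml"

fun success_assured :: "('b,'pf,'pg) dml \<Rightarrow> bool" where
  "success_assured DOk = True"
| "success_assured (DFact f) = True"
| "success_assured (DPlus D1 D2) = (success_assured D1 \<or> success_assured D2)"
| "success_assured _ = False"

fun wf_dml :: "('b,'pf,'pg) dml \<Rightarrow> bool" where
  "wf_dml DEmpty = True"
| "wf_dml DOk = True"
| "wf_dml (DFact f) = True"
| "wf_dml (DPlus D1 D2) = (wf_dml D1 \<and> wf_dml D2)"
| "wf_dml (DImp \<phi> D) = (wf_cond \<phi> \<and> wf_dml D)"
| "wf_dml (DFrom P D) = (wf_dml D \<and>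
      (terminating_pat P \<or> (semi_terminating_pat P \<and> success_assured D)))"

fun subconds :: "('b,'pf,'pg) cond \<Rightarrow> ('b,'pf,'pg) cond set" where
  "subconds CFalse = {CFalse}"
| "subconds (CBool B) = {CBool B}"
| "subconds (CNot \<psi>) = insert (CNot \<psi>) (subconds \<psi>)"
| "subconds (COr \<psi>1 \<psi>2) = insert (COr \<psi>1 \<psi>2) (subconds \<psi>1 \<union> subconds \<psi>2)"
| "subconds (CEx P \<psi>) = insert (CEx P \<psi>) (subconds \<psi>)"

fun subqs :: "('b,'pf,'pg) dml \<Rightarrow> ('b,'pf,'pg) dml set" where
  "subqs DEmpty = {DEmpty}"
| "subqs DOk = {DOk}"
| "subqs (DFact f) = {DFact f}"
| "subqs (DPlus D1 D2) = insert (DPlus D1 D2) (subqs D1 \<union> subqs D2)"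
| "subqs (DImp \<phi> D) = insert (DImp \<phi> D) (subqs D)"
| "subqs (DFrom P D) = insert (DFrom P D) (subqs D)"

fun qconds :: "('b,'pf,'pg) dml \<Rightarrow> ('b,'pf,'pg) cond set" where
  "qconds (DPlus D1 D2) = qconds D1 \<union> qconds D2"
| "qconds (DImp \<phi> D) = subconds \<phi> \<union> qconds D"
| "qconds (DFrom P D) = qconds D"
| "qconds _ = {}"

datatype ('x,'v,'f,'b,'pf,'pg) cframe =
    CEval "('x,'v) env" "('b,'pf,'pg) cond"
  | CNotF
  | COrF "('x,'v) env" "('b,'pf,'pg) cond"
  | CRes bool
  | CExF "'f multiset" "('x,'v) env" "('pf,'pg) pattern" "('b,'pf,'pg) cond"

text \<open>Stacks are lists, top at the right; a rule X \<mapsto> Y rewrites S X to S Y.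
  F is the current database.\<close>
inductive cstep ::
  "(('x,'v) env \<Rightarrow> 'pf \<Rightarrow> 'f) \<Rightarrow> ('pf \<Rightarrow> 'x set) \<Rightarrow> ('pg \<Rightarrow> 'x set) \<Rightarrow> (('x,'v) env \<Rightarrow> 'b \<Rightarrow> bool)
   \<Rightarrow> 'f multiset \<Rightarrow> ('x,'v,'f,'b,'pf,'pg) cframe list \<Rightarrow> ('x,'v,'f,'b,'pf,'pg) cframe list \<Rightarrow> bool"
  for inst fvars gvars evalB F where
  c_false: "cstep inst fvars gvars evalB F (S @ [CEval e CFalse]) (S @ [CRes False])"
| c_bool: "cstep inst fvars gvars evalB F (S @ [CEval e (CBool B)]) (S @ [CRes (evalB e B)])"
| c_not: "cstep inst fvars gvars evalB F (S @ [CEval e (CNot \<psi>)]) (S @ [CNotF, CEval e \<psi>])"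
| c_notres: "cstep inst fvars gvars evalB F (S @ [CNotF, CRes b]) (S @ [CRes (\<not> b)])"
| c_or: "cstep inst fvars gvars evalB F (S @ [CEval e (COr \<psi>1 \<psi>2)]) (S @ [COrF e \<psi>1, CEval e \<psi>2])"
| c_or_true: "cstep inst fvars gvars evalB F (S @ [COrF e \<psi>, CRes True]) (S @ [CRes True])"
| c_or_false: "cstep inst fvars gvars evalB F (S @ [COrF e \<psi>, CRes False]) (S @ [CEval e \<psi>])"
| c_ex: "cstep inst fvars gvars evalB F (S @ [CEval e (CEx P \<psi>)]) (S @ [CExF F e P \<psi>])"
| c_ex_match: "\<lbrakk> ext_env fvars gvars P e e';
                 F' = F'' + image_mset (inst e') (pkeep P + pret P) \<rbrakk> \<Longrightarrow>
     cstep inst fvars gvars evalB F (S @ [CExF F' e P \<psi>])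
        (S @ [CExF (F'' + image_mset (inst e') (pkeep P)) e P \<psi>, CEval e' \<psi>])"
| c_ex_false: "cstep inst fvars gvars evalB F (S @ [CExF F' e P \<psi>, CRes False]) (S @ [CExF F' e P \<psi>])"
| c_ex_true: "cstep inst fvars gvars evalB F (S @ [CExF F' e P \<psi>, CRes True]) (S @ [CRes True])"
| c_ex_none: "\<not> (\<exists>e' F''. ext_env fvars gvars P e e' \<and>
                   F' = F'' + image_mset (inst e') (pkeep P + pret P)) \<Longrightarrow>
     cstep inst fvars gvars evalB F (S @ [CExF F' e P \<psi>]) (S @ [CRes False])"

datatype ('x,'v,'f,'b,'pf,'pg) dframe =
    DOkF
  | DEval "('x,'v) env" "('b,'pf,'pg) dml"
  | DPlusF "('x,'v) env" "('b,'pf,'pg) dml"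
  | DCond "('x,'v) env" "('x,'v,'f,'b,'pf,'pg) cframe list" "('b,'pf,'pg) dml"
  | DIter "'f multiset" "('x,'v) env" bool "('pf,'pg) pattern" "('b,'pf,'pg) dml"
  | DTent "'f multiset" "('x,'v) env" bool "'f multiset" "('pf,'pg) pattern" "('b,'pf,'pg) dml"

datatype ('x,'v,'f,'b,'pf,'pg,'s) dstate =
    DSt "'f multiset" "'f multiset" "('s \<times> nat) multiset" "('x,'v,'f,'b,'pf,'pg) dframe list"
  | New "'f multiset" "('s \<times> nat) multiset"
  | Fail "'f multiset" "('s \<times> nat) multiset"

inductive dstep ::
  "(('x,'v) env \<Rightarrow> 'pf \<Rightarrow> 'f) \<Rightarrow> (('x,'v) env \<Rightarrow> 'pg \<Rightarrow> 's \<times> nat)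
   \<Rightarrow> ('pf \<Rightarrow> 'x set) \<Rightarrow> ('pg \<Rightarrow> 'x set) \<Rightarrow> (('x,'v) env \<Rightarrow> 'b \<Rightarrow> bool)
   \<Rightarrow> ('x,'v,'f,'b,'pf,'pg,'s) dstate \<Rightarrow> ('x,'v,'f,'b,'pf,'pg,'s) dstate \<Rightarrow> bool"
  for inst instG fvars gvars evalB where
  d_okok: "dstep inst instG fvars gvars evalB (DSt F F' Fs (S @ [DOkF, DOkF])) (DSt F F' Fs (S @ [DOkF]))"
| d_ok: "dstep inst instG fvars gvars evalB (DSt F F' Fs (S @ [DEval e DOk])) (DSt F F' Fs (S @ [DOkF]))"
| d_empty: "dstep inst instG fvars gvars evalB (DSt F F' Fs (S @ [DEval e DEmpty])) (DSt F F' Fs S)"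
| d_fact: "dstep inst instG fvars gvars evalB (DSt F F' Fs (S @ [DEval e (DFact f)]))
             (DSt F (F' + {# inst e f #}) Fs (S @ [DOkF]))"
| d_plus: "dstep inst instG fvars gvars evalB (DSt F F' Fs (S @ [DEval e (DPlus R1 R2)]))
             (DSt F F' Fs (S @ [DPlusF e R2, DEval e R1]))"
| d_plus_ok: "dstep inst instG fvars gvars evalB (DSt F F' Fs (S @ [DPlusF e R2, DOkF]))
             (DSt F F' Fs (S @ [DOkF, DEval e R2]))"
| d_plus_top: "dstep inst instG fvars gvars evalB (DSt F F' Fs (S @ [DPlusF e R2]))
             (DSt F F' Fs (S @ [DEval e R2]))"
| d_imp: "dstep inst instG fvars gvars evalB (DSt F F' Fs (S @ [DEval e (DImp \<phi> R)]))
             (DSt F F' Fs (S @ [DCond e [CEval e \<phi>] R]))"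
| d_cond_false: "dstep inst instG fvars gvars evalB (DSt F F' Fs (S @ [DCond e [CRes False] R]))
             (DSt F F' Fs S)"
| d_cond_true: "dstep inst instG fvars gvars evalB (DSt F F' Fs (S @ [DCond e [CRes True] R]))
             (DSt F F' Fs (S @ [DEval e R]))"
| d_cond_step: "cstep inst fvars gvars evalB F S' S'' \<Longrightarrow>
     dstep inst instG fvars gvars evalB (DSt F F' Fs (S @ [DCond e S' R]))
             (DSt F F' Fs (S @ [DCond e S'' R]))"
| d_from: "dstep inst instG fvars gvars evalB (DSt F F' Fs (S @ [DEval e (DFrom P R)]))
             (DSt F F' Fs (S @ [DIter F e False P R]))"
| d_iter_match: "\<lbrakk> ext_env fvars gvars P e e';
      F = G + image_mset (inst e') (pkeep P + pret P + pdel P);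
      H = H' + image_mset (inst e') (pkeep P + pret P + pdel P);
      Fs = K + image_mset (instG e') (pfresh P) \<rbrakk> \<Longrightarrow>
     dstep inst instG fvars gvars evalB (DSt F F' Fs (S @ [DIter H e B P R]))
       (DSt (G + image_mset (inst e') (pkeep P + pret P)) F'
            (K + upsilon (image_mset (instG e') (pfresh P)))
            (S @ [DTent (H' + image_mset (inst e') (pkeep P)) e B (image_mset (inst e') (pdel P)) P R,
                  DEval e' R]))"
| d_tent_restore: "dstep inst instG fvars gvars evalB (DSt F F' Fs (S @ [DTent H e B F0 P R]))
       (DSt (F + F0) F' Fs (S @ [DIter (H + F0) e B P R]))"
| d_tent_ok: "dstep inst instG fvars gvars evalB (DSt F F' Fs (S @ [DTent H e B F0 P R, DOkF]))
       (DSt F F' Fs (S @ [DIter H e True P R]))"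
| d_iter_done: "\<not> (\<exists>e' H'. ext_env fvars gvars P e e' \<and>
                    H = H' + image_mset (inst e') (pkeep P + pret P + pdel P)) \<Longrightarrow>
     dstep inst instG fvars gvars evalB (DSt F F' Fs (S @ [DIter H e B P R]))
       (DSt F F' Fs (S @ (if B then [DOkF] else [])))"
| d_new: "dstep inst instG fvars gvars evalB (DSt F F' Fs [DOkF]) (New (F + F') Fs)"
| d_fail: "dstep inst instG fvars gvars evalB (DSt F F' Fs []) (Fail (F + F') Fs)"

text \<open>The terms of R^dml(Q): all states whose frames refer to subqueries
  (and subconditions) of Q.\<close>
fun cframe_of :: "('b,'pf,'pg) dml \<Rightarrow> ('x,'v,'f,'b,'pf,'pg) cframe \<Rightarrow> bool" where
  "cframe_of Q (CEval e \<psi>) = (\<psi> \<in> qconds Q)"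
| "cframe_of Q CNotF = True"
| "cframe_of Q (COrF e \<psi>) = (\<psi> \<in> qconds Q)"
| "cframe_of Q (CRes b) = True"
| "cframe_of Q (CExF F e P \<psi>) = (CEx P \<psi> \<in> qconds Q)"

fun dframe_of :: "('b,'pf,'pg) dml \<Rightarrow> ('x,'v,'f,'b,'pf,'pg) dframe \<Rightarrow> bool" where
  "dframe_of Q DOkF = True"
| "dframe_of Q (DEval e R) = (R \<in> subqs Q)"
| "dframe_of Q (DPlusF e R) = (R \<in> subqs Q)"
| "dframe_of Q (DCond e S' R) = (R \<in> subqs Q \<and> (\<forall>c\<in>set S'. cframe_of Q c))"
| "dframe_of Q (DIter H e B P R) = (DFrom P R \<in> subqs Q)"
| "dframe_of Q (DTent H e B F0 P R) = (DFrom P R \<in> subqs Q)"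

fun dstate_of :: "('b,'pf,'pg) dml \<Rightarrow> ('x,'v,'f,'b,'pf,'pg,'s) dstate \<Rightarrow> bool" where
  "dstate_of Q (DSt F F' Fs S) = (\<forall>fr\<in>set S. dframe_of Q fr)"
| "dstate_of Q (New G Gs) = True"
| "dstate_of Q (Fail G Gs) = True"

end

theory Submission
  imports Defs "HOL-Library.Multiset_Order" "HOL-Library.Product_Lexorder"
begin

text \<open>
  A frame is weighed lexicographically by the size of the subquery or subcondition it
  refers to, a rank of its kind, and the size of the database it still has to search (an
  If-frame also by the multiset of the weights of its condition frames); a stack is
  weighed by the multiset of its frame weights, and every step replaces the top of the
  stack by lighter frames. The delicate case is a From-iterator whose pattern is only
  semi-terminating: a match retains no fact, so the iterator's database does not shrink,
  its deleted facts merely move into the tentative frame. The body is then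
  success-assured, so some frame above the tentative frame promises Ok, and no step on top
  of a frame breaks such a promise. Hence the tentative frame may weigh less than the
  iterator while a promise lies above it, and more otherwise, which pays for restoring it:
  that step is possible only when nothing lies above.
\<close>

fun wf_cframe :: "('x,'v,'f,'b,'pf,'pg) cframe \<Rightarrow> bool" where
  "wf_cframe (CEval e \<psi>) = wf_cond \<psi>"
| "wf_cframe CNotF = True"
| "wf_cframe (COrF e \<psi>) = wf_cond \<psi>"
| "wf_cframe (CRes b) = True"
| "wf_cframe (CExF F e P \<psi>) = wf_cond (CEx P \<psi>)"

fun wf_dframe :: "('x,'v,'f,'b,'pf,'pg) dframe \<Rightarrow> bool" where
  "wf_dframe DOkF = True"
| "wf_dframe (DEval e R) = wf_dml R"
| "wf_dframe (DPlusF e R) = wf_dml R"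
| "wf_dframe (DCond e S R) = (wf_dml R \<and> (\<forall>c\<in>set S. wf_cframe c))"
| "wf_dframe (DIter H e B P R) = wf_dml (DFrom P R)"
| "wf_dframe (DTent H e B F0 P R) = wf_dml (DFrom P R)"

fun wf_dstate :: "('x,'v,'f,'b,'pf,'pg,'s) dstate \<Rightarrow> bool" where
  "wf_dstate (DSt F F' Fs S) = (\<forall>fr\<in>set S. wf_dframe fr)"
| "wf_dstate (New G Gs) = True"
| "wf_dstate (Fail G Gs) = True"

lemma wf_cond_subconds: "wf_cond \<phi> \<Longrightarrow> \<psi> \<in> subconds \<phi> \<Longrightarrow> wf_cond \<psi>"
  by (induction \<phi>) auto

lemma wf_cond_qconds: "wf_dml Q \<Longrightarrow> \<psi> \<in> qconds Q \<Longrightarrow> wf_cond \<psi>"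
  by (induction Q) (auto dest: wf_cond_subconds)

lemma wf_dml_subqs: "wf_dml Q \<Longrightarrow> R \<in> subqs Q \<Longrightarrow> wf_dml R"
  by (induction Q) auto

lemma wf_cframe_if_cframe_of: "wf_dml Q \<Longrightarrow> cframe_of Q c \<Longrightarrow> wf_cframe c"
  by (cases c) (auto dest: wf_cond_qconds simp del: wf_cond.simps)

lemma wf_dframe_if_dframe_of: "wf_dml Q \<Longrightarrow> dframe_of Q fr \<Longrightarrow> wf_dframe fr"
  by (cases fr) (auto dest: wf_dml_subqs wf_cframe_if_cframe_of simp del: wf_dml.simps)

lemma wf_dstate_if_dstate_of: "wf_dml Q \<Longrightarrow> dstate_of Q s \<Longrightarrow> wf_dstate s"
  by (cases s) (auto dest: wf_dframe_if_dframe_of)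

lemma cstep_preserves_wf_cframe:
  "cstep inst fvars gvars evalB F S S' \<Longrightarrow> \<forall>c\<in>set S. wf_cframe c \<Longrightarrow> \<forall>c\<in>set S'. wf_cframe c"
  by (induction rule: cstep.induct) auto

lemma dstep_preserves_wf_dstate:
  "dstep inst instG fvars gvars evalB s t \<Longrightarrow> wf_dstate s \<Longrightarrow> wf_dstate t"
  by (induction rule: dstep.induct) (auto dest: cstep_preserves_wf_cframe)

fun cframe_weight :: "('x,'v,'f,'b,'pf,'pg) cframe \<Rightarrow> nat \<times> nat \<times> nat" where
  "cframe_weight (CEval e \<psi>) = (size \<psi>, 1, 0)"
| "cframe_weight CNotF = (0, 0, 0)"
| "cframe_weight (COrF e \<psi>) = (size \<psi>, 2, 0)"
| "cframe_weight (CRes b) = (0, 0, 0)"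
| "cframe_weight (CExF F e P \<psi>) = (size \<psi>, 3, size F)"

definition cstack_weight :: "('x,'v,'f,'b,'pf,'pg) cframe list \<Rightarrow> (nat \<times> nat \<times> nat) multiset" where
  "cstack_weight S = mset (map cframe_weight S)"

lemma cstep_cstack_weight_less:
  assumes "cstep inst fvars gvars evalB F S S'" and "\<forall>c\<in>set S. wf_cframe c"
  shows "cstack_weight S' < cstack_weight S"
  using assms
proof (induction rule: cstep.induct)
  case (c_ex_match P e e' F' F'' S \<psi>)
  then have "pret P \<noteq> {#}"
    by (simp add: term_pres_pat_def)
  then have "size (F'' + image_mset (inst e') (pkeep P)) < size F'"
    using c_ex_match.hyps(2) by (simp add: nonempty_has_size)
  then show ?case
    by (simp add: cstack_weight_def)
next
  case (c_or_false S e \<psi>)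
  have "{#(size \<psi>, 1, 0)#} < {#(size \<psi>, 2::nat, 0::nat)#}"
    by simp
  also have "\<dots> < {#(0, 0, 0), (size \<psi>, 2, 0)#}"
    by (simp add: le_multiset_right_total)
  finally show ?case
    by (simp add: cstack_weight_def)
qed (simp_all add: cstack_weight_def le_multiset_right_total)

type_synonym dweight = "nat \<times> nat \<times> nat \<times> (nat \<times> nat \<times> nat) multiset"

fun promises_ok :: "('x,'v,'f,'b,'pf,'pg) dframe \<Rightarrow> bool" where
  "promises_ok DOkF = True"
| "promises_ok (DEval e R) = success_assured R"
| "promises_ok (DPlusF e R) = success_assured R"
| "promises_ok (DCond e S R) = False"
| "promises_ok (DIter H e B P R) = B"
| "promises_ok (DTent H e B F0 P R) = B"

text \<open>The flag records whether some frame above promises Ok.\<close>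
fun dframe_weight :: "bool \<Rightarrow> ('x,'v,'f,'b,'pf,'pg) dframe \<Rightarrow> dweight" where
  "dframe_weight ok DOkF = (0, 0, 0, {#})"
| "dframe_weight ok (DEval e R) = (size R, 0, 0, {#})"
| "dframe_weight ok (DPlusF e R) = (size R, 1, 0, {#})"
| "dframe_weight ok (DCond e S R) = (size R, 2, 0, cstack_weight S)"
| "dframe_weight ok (DIter H e B P R) = (size R, 3, 2 * size H + 1, {#})"
| "dframe_weight ok (DTent H e B F0 P R) =
     (size R, 3, 2 * (size H + size F0) + (if ok \<and> F0 \<noteq> {#} then 0 else 2), {#})"

fun dstack_weight :: "('x,'v,'f,'b,'pf,'pg) dframe list \<Rightarrow> dweight multiset" where
  "dstack_weight [] = {#}"
| "dstack_weight (fr # T) = add_mset (dframe_weight (\<exists>g\<in>set T. promises_ok g) fr) (dstack_weight T)"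

lemma dframe_weight_antimono: "(ok \<Longrightarrow> ok') \<Longrightarrow> dframe_weight ok' fr \<le> dframe_weight ok fr"
  by (cases fr) auto

lemma dstack_weight_append_less:
  assumes "dstack_weight Y < dstack_weight X"
    and "\<exists>g\<in>set X. promises_ok g \<Longrightarrow> \<exists>g\<in>set Y. promises_ok g"
  shows "dstack_weight (S @ Y) < dstack_weight (S @ X)"
proof (induction S)
  case (Cons fr S)
  have "dframe_weight (\<exists>g\<in>set (S @ Y). promises_ok g) fr \<le> dframe_weight (\<exists>g\<in>set (S @ X). promises_ok g) fr"
    using assms(2) by (intro dframe_weight_antimono) auto
  with Cons.IH show ?case
    by (simp add: add_mset_lt_le_lt)
qed (simp add: assms(1))

lemma dstack_weight_iter_match_less:
  assumes "wf_dml (DFrom P R)" and "H = H' + image_mset g (pkeep P + pret P + pdel P)"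
  shows "dstack_weight [DTent (H' + image_mset g (pkeep P)) e B (image_mset g (pdel P)) P R, DEval e' R]
           < dstack_weight [DIter H e B P R]"
proof -
  let ?F0 = "image_mset g (pdel P)"
  have "2 * (size (H' + image_mset g (pkeep P)) + size ?F0)
          + (if success_assured R \<and> ?F0 \<noteq> {#} then 0 else 2) < 2 * size H + 1"
  proof (cases "pret P = {#}")
    case True
    with assms(1) have "success_assured R" and "pdel P \<noteq> {#}"
      by (auto simp: terminating_pat_def semi_terminating_pat_def)
    with True show ?thesis
      using assms(2) by simp
  next
    case False
    then show ?thesis
      using assms(2) by (simp add: nonempty_has_size)
  qed
  then show ?thesis
    by (simp add: mset_lt_single_right_iff)
qed

lemma dstep_dstack_weight_less:
  assumes "dstep inst instG fvars gvars evalB (DSt F F' Fs S) (DSt G G' Gs S')"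
    and "\<forall>fr\<in>set S. wf_dframe fr"
  shows "dstack_weight S' < dstack_weight S"
  using assms(1)
proof (cases rule: dstep.cases)
  case (d_cond_step S1 S2 S0 e R)
  then have "cstack_weight S2 < cstack_weight S1"
    using assms(2) by (auto intro: cstep_cstack_weight_less)
  with d_cond_step show ?thesis
    by (auto intro: dstack_weight_append_less)
next
  case (d_iter_match P e e' H H' K S0 B R)
  then show ?thesis
    using assms(2) by (auto intro!: dstack_weight_append_less dstack_weight_iter_match_less)
next
  case (d_tent_ok S0 H e B F0 P R)
  have "dstack_weight [DIter H e True P R] < dstack_weight [DTent H e B F0 P R, DOkF]"
    by (cases "F0 = {#}") (auto intro: add_mset_lt_lt_le simp: nonempty_has_size)
  with d_tent_ok show ?thesis
    by (auto intro: dstack_weight_append_less)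
qed (auto intro!: dstack_weight_append_less dstack_weight_append_less[where Y = "[]", simplified]
       simp: le_multiset_right_total)

fun dstate_weight :: "('x,'v,'f,'b,'pf,'pg,'s) dstate \<Rightarrow> dweight multiset" where
  "dstate_weight (DSt F F' Fs S) = dstack_weight S"
| "dstate_weight (New G Gs) = {#}"
| "dstate_weight (Fail G Gs) = {#}"

lemma dstep_from_DSt: "dstep inst instG fvars gvars evalB s t \<Longrightarrow> \<exists>F F' Fs S. s = DSt F F' Fs S"
  by (cases rule: dstep.cases) auto

lemma dstep_dstate_weight_less:
  assumes "dstep inst instG fvars gvars evalB s t" and "dstep inst instG fvars gvars evalB t u"
    and "wf_dstate s"
  shows "dstate_weight t < dstate_weight s"
  using dstep_from_DSt[OF assms(1)] dstep_from_DSt[OF assms(2)] assms(1,3)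
  by (auto dest: dstep_dstack_weight_less)

theorem theorem6:
  fixes Q :: "('b,'pf,'pg) dml"
    and inst :: "('x,'v) env \<Rightarrow> 'pf \<Rightarrow> 'f"
    and instG :: "('x,'v) env \<Rightarrow> 'pg \<Rightarrow> 's \<times> nat"
    and fvars :: "'pf \<Rightarrow> 'x set" and gvars :: "'pg \<Rightarrow> 'x set"
    and evalB :: "('x,'v) env \<Rightarrow> 'b \<Rightarrow> bool"
  assumes "wf_dml Q"
  shows "\<not> (\<exists>seq :: nat \<Rightarrow> ('x,'v,'f,'b,'pf,'pg,'s) dstate.
              dstate_of Q (seq 0) \<and>
              (\<forall>i. dstep inst instG fvars gvars evalB (seq i) (seq (Suc i))))"
proof
  assume "\<exists>seq :: nat \<Rightarrow> ('x,'v,'f,'b,'pf,'pg,'s) dstate.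
            dstate_of Q (seq 0) \<and> (\<forall>i. dstep inst instG fvars gvars evalB (seq i) (seq (Suc i)))"
  then obtain seq :: "nat \<Rightarrow> ('x,'v,'f,'b,'pf,'pg,'s) dstate"
    where start: "dstate_of Q (seq 0)"
      and run: "\<And>i. dstep inst instG fvars gvars evalB (seq i) (seq (Suc i))"
    by blast
  have wf_run: "wf_dstate (seq i)" for i
    by (induction i)
      (auto intro: wf_dstate_if_dstate_of[OF assms start] dstep_preserves_wf_dstate[OF run])
  have "dstate_weight (seq (Suc i)) < dstate_weight (seq i)" for i
    using dstep_dstate_weight_less[OF run run wf_run] .
  then show False
    using wf_no_infinite_down_chainE[OF wf_less_multiset, of "dstate_weight \<circ> seq"] by auto
qed

end
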